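(* Let $R=\prod_{i=1}^nR_i$ be a direct product of rings $R_1,\ldots,R_n$. Then $R$ is a left localizable ring if and only if each of the rings $R_1,\ldots,R_n$ is a left localizable ring.
   Context: All rings are associative with $1$. A multiplicative subset $S$ of $R$ ($1\in S$, $0\notin S$, closed under multiplication) is a left Ore set if $Sr\cap Rs\neq\emptyset$ for all $r\in R$, $s\in S$. A left Ore set $S$ is a left denominator set if $rs=0$ ($r\in R$, $s\in S$) implies $tr=0$ for some $t\in S$. A ring $R$ is a left localizable ring if every nonzero element $r\in R$ lies in some left denominator set of $R$. *)

theory Defs
  imports "HOL-Algebra.Chinese_Remainder"
begin

definition multiplicative_subset :: "('a, 'm) ring_scheme \<Rightarrow> 'a set \<Rightarrow> bool" where
  "multiplicative_subset R S \<longleftrightarrow>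
     S \<subseteq> carrier R \<and> \<one>\<^bsub>R\<^esub> \<in> S \<and> \<zero>\<^bsub>R\<^esub> \<notin> S \<and>
     (\<forall>s\<in>S. \<forall>t\<in>S. s \<otimes>\<^bsub>R\<^esub> t \<in> S)"

definition left_Ore_set :: "('a, 'm) ring_scheme \<Rightarrow> 'a set \<Rightarrow> bool" where
  "left_Ore_set R S \<longleftrightarrow> multiplicative_subset R S \<and>
     (\<forall>r\<in>carrier R. \<forall>s\<in>S. \<exists>s'\<in>S. \<exists>r'\<in>carrier R. s' \<otimes>\<^bsub>R\<^esub> r = r' \<otimes>\<^bsub>R\<^esub> s)"

definition left_denominator_set :: "('a, 'm) ring_scheme \<Rightarrow> 'a set \<Rightarrow> bool" where
  "left_denominator_set R S \<longleftrightarrow> left_Ore_set R S \<and>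
     (\<forall>r\<in>carrier R. \<forall>s\<in>S. r \<otimes>\<^bsub>R\<^esub> s = \<zero>\<^bsub>R\<^esub> \<longrightarrow> (\<exists>t\<in>S. t \<otimes>\<^bsub>R\<^esub> r = \<zero>\<^bsub>R\<^esub>))"

definition left_localizable :: "('a, 'm) ring_scheme \<Rightarrow> bool" where
  "left_localizable R \<longleftrightarrow>
     (\<forall>r\<in>carrier R. r \<noteq> \<zero>\<^bsub>R\<^esub> \<longrightarrow> (\<exists>S. left_denominator_set R S \<and> r \<in> S))"

end

theory Submission
  imports Defs
begin

text \<open>
  A nonzero element \<open>(a, b)\<close> of \<open>R \<times> S\<close> lies in \<open>A \<times> B\<close>, where \<open>A\<close> is a left
  denominator set of \<open>R\<close> through \<open>a\<close> if \<open>a \<noteq> 0\<close> and \<open>A = {0, 1}\<close> otherwise, and likewise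
  for \<open>B\<close>: the Ore and annihilator conditions hold componentwise, and \<open>A \<times> B\<close> avoids zero
  because \<open>A\<close> or \<open>B\<close> does. Conversely, if \<open>T\<close> is a left denominator set of \<open>R \<times> S\<close>
  through \<open>(a, 0)\<close>, its first projection is one of \<open>R\<close> through \<open>a\<close>: Ore witnesses and
  annihilators come from lifting \<open>r\<close> to \<open>(r, 0)\<close>, and no \<open>(0, y)\<close> lies in \<open>T\<close> because
  \<open>(0, y) (a, 0) = 0\<close>. The list product is an iterated binary product up to isomorphism,
  and swapping the factors handles the second projection.
\<close>

definition left_denominator_monoid :: "('a, 'm) ring_scheme \<Rightarrow> 'a set \<Rightarrow> bool" where
  "left_denominator_monoid R S \<longleftrightarrow>
     S \<subseteq> carrier R \<and> \<one>\<^bsub>R\<^esub> \<in> S \<and> (\<forall>s\<in>S. \<forall>t\<in>S. s \<otimes>\<^bsub>R\<^esub> t \<in> S) \<and>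
     (\<forall>r\<in>carrier R. \<forall>s\<in>S. \<exists>s'\<in>S. \<exists>r'\<in>carrier R. s' \<otimes>\<^bsub>R\<^esub> r = r' \<otimes>\<^bsub>R\<^esub> s) \<and>
     (\<forall>r\<in>carrier R. \<forall>s\<in>S. r \<otimes>\<^bsub>R\<^esub> s = \<zero>\<^bsub>R\<^esub> \<longrightarrow> (\<exists>t\<in>S. t \<otimes>\<^bsub>R\<^esub> r = \<zero>\<^bsub>R\<^esub>))"

lemma left_denominator_set_iff_monoid:
  "left_denominator_set R S \<longleftrightarrow> left_denominator_monoid R S \<and> \<zero>\<^bsub>R\<^esub> \<notin> S"
  unfolding left_denominator_set_def left_Ore_set_def multiplicative_subset_def
    left_denominator_monoid_def
  by blast

lemma left_denominator_monoidI:
  assumes "S \<subseteq> carrier R" and "\<one>\<^bsub>R\<^esub> \<in> S"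
    and "\<And>s t. s \<in> S \<Longrightarrow> t \<in> S \<Longrightarrow> s \<otimes>\<^bsub>R\<^esub> t \<in> S"
    and "\<And>r s. r \<in> carrier R \<Longrightarrow> s \<in> S \<Longrightarrow>
           \<exists>s'\<in>S. \<exists>r'\<in>carrier R. s' \<otimes>\<^bsub>R\<^esub> r = r' \<otimes>\<^bsub>R\<^esub> s"
    and "\<And>r s. r \<in> carrier R \<Longrightarrow> s \<in> S \<Longrightarrow> r \<otimes>\<^bsub>R\<^esub> s = \<zero>\<^bsub>R\<^esub> \<Longrightarrow>
           \<exists>t\<in>S. t \<otimes>\<^bsub>R\<^esub> r = \<zero>\<^bsub>R\<^esub>"
  shows "left_denominator_monoid R S"
  using assms unfolding left_denominator_monoid_def by blast

lemma
  assumes "left_denominator_monoid R S"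
  shows left_denominator_monoid_subset: "S \<subseteq> carrier R"
    and left_denominator_monoid_one: "\<one>\<^bsub>R\<^esub> \<in> S"
    and left_denominator_monoid_mult: "\<lbrakk>s \<in> S; t \<in> S\<rbrakk> \<Longrightarrow> s \<otimes>\<^bsub>R\<^esub> t \<in> S"
    and left_denominator_monoid_Ore: "\<lbrakk>r \<in> carrier R; s \<in> S\<rbrakk> \<Longrightarrow>
           \<exists>s'\<in>S. \<exists>r'\<in>carrier R. s' \<otimes>\<^bsub>R\<^esub> r = r' \<otimes>\<^bsub>R\<^esub> s"
    and left_denominator_monoid_annihilator: "\<lbrakk>r \<in> carrier R; s \<in> S; r \<otimes>\<^bsub>R\<^esub> s = \<zero>\<^bsub>R\<^esub>\<rbrakk> \<Longrightarrow>
           \<exists>t\<in>S. t \<otimes>\<^bsub>R\<^esub> r = \<zero>\<^bsub>R\<^esub>"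
  using assms unfolding left_denominator_monoid_def by blast+

lemma (in ring) left_denominator_monoid_zero_one: "left_denominator_monoid R {\<zero>, \<one>}"
proof (rule left_denominator_monoidI)
  fix r s assume r: "r \<in> carrier R" and s: "s \<in> {\<zero>, \<one>}"
  show "\<exists>s'\<in>{\<zero>, \<one>}. \<exists>r'\<in>carrier R. s' \<otimes> r = r' \<otimes> s"
  proof (cases "s = \<zero>")
    case True
    with r show ?thesis by (intro bexI[of _ \<zero>] bexI[of _ r]) auto
  next
    case False
    with r s show ?thesis by (intro bexI[of _ \<one>] bexI[of _ r]) auto
  qed
  show "\<exists>t\<in>{\<zero>, \<one>}. t \<otimes> r = \<zero>"
    using r by (intro bexI[of _ \<zero>]) auto
qed auto

lemma (in ring) ex_left_denominator_monoid:
  assumes "left_localizable R" and "a \<in> carrier R"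
  shows "\<exists>A. left_denominator_monoid R A \<and> a \<in> A \<and> (a \<noteq> \<zero> \<longrightarrow> \<zero> \<notin> A)"
proof (cases "a = \<zero>")
  case True
  then show ?thesis using left_denominator_monoid_zero_one by blast
next
  case False
  with assms obtain A where "left_denominator_set R A" "a \<in> A"
    unfolding left_localizable_def by blast
  then show ?thesis by (auto simp: left_denominator_set_iff_monoid)
qed

lemma left_localizable_trivial:
  assumes "carrier R \<subseteq> {\<zero>\<^bsub>R\<^esub>}"
  shows "left_localizable R"
  using assms unfolding left_localizable_def by blast

lemma left_denominator_set_ring_iso_image:
  assumes "ring R" and "ring S" and h: "h \<in> ring_iso R S" and T: "left_denominator_set R T"
  shows "left_denominator_set S (h ` T)"
proof -
  interpret R: ring R by fact
  have hom: "h \<in> ring_hom R S" and bij: "bij_betw h (carrier R) (carrier S)"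
    using h by (auto simp: ring_iso_def)
  have h_zero: "h \<zero>\<^bsub>R\<^esub> = \<zero>\<^bsub>S\<^esub>"
    using ring_hom_zero[OF hom assms(1,2)] .
  have h_mult: "h (x \<otimes>\<^bsub>R\<^esub> y) = h x \<otimes>\<^bsub>S\<^esub> h y" if "x \<in> carrier R" "y \<in> carrier R" for x y
    using ring_hom_mult[OF hom that] .
  have preimage: "\<exists>x\<in>carrier R. y = h x" if "y \<in> carrier S" for y
    using that bij_betw_imp_surj_on[OF bij] by blast
  have h_eq_zero: "x = \<zero>\<^bsub>R\<^esub>" if "x \<in> carrier R" and "h x = \<zero>\<^bsub>S\<^esub>" for x
    using inj_onD[OF bij_betw_imp_inj_on[OF bij] _ that(1) R.zero_closed] that(2) h_zero
    by simp
  have TM: "left_denominator_monoid R T" and T0: "\<zero>\<^bsub>R\<^esub> \<notin> T"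
    using T by (auto simp: left_denominator_set_iff_monoid)
  note TR = left_denominator_monoid_subset[OF TM]
  have "left_denominator_monoid S (h ` T)"
  proof (rule left_denominator_monoidI)
    show "h ` T \<subseteq> carrier S"
      using TR ring_hom_closed[OF hom] by auto
    show "\<one>\<^bsub>S\<^esub> \<in> h ` T"
      using left_denominator_monoid_one[OF TM] ring_hom_one[OF hom] by force
  next
    fix x y assume "x \<in> h ` T" "y \<in> h ` T"
    then obtain u v where uv: "u \<in> T" "v \<in> T" "x = h u" "y = h v" by blast
    then have "x \<otimes>\<^bsub>S\<^esub> y = h (u \<otimes>\<^bsub>R\<^esub> v)"
      using TR h_mult by (simp add: subset_iff)
    then show "x \<otimes>\<^bsub>S\<^esub> y \<in> h ` T"
      using left_denominator_monoid_mult[OF TM uv(1,2)] by blast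
  next
    fix y s assume "y \<in> carrier S" "s \<in> h ` T"
    then obtain r t where r: "r \<in> carrier R" "y = h r" and t: "t \<in> T" "s = h t"
      using preimage by blast
    obtain t' r' where t': "t' \<in> T" "r' \<in> carrier R" "t' \<otimes>\<^bsub>R\<^esub> r = r' \<otimes>\<^bsub>R\<^esub> t"
      using left_denominator_monoid_Ore[OF TM r(1) t(1)] by blast
    have "h t' \<otimes>\<^bsub>S\<^esub> y = h (t' \<otimes>\<^bsub>R\<^esub> r)"
      using r t'(1) TR h_mult by (simp add: subset_iff)
    also have "\<dots> = h (r' \<otimes>\<^bsub>R\<^esub> t)"
      using t'(3) by simp
    also have "\<dots> = h r' \<otimes>\<^bsub>S\<^esub> s"
      using t t'(2) TR h_mult by (simp add: subset_iff)
    finally show "\<exists>s'\<in>h ` T. \<exists>r'\<in>carrier S. s' \<otimes>\<^bsub>S\<^esub> y = r' \<otimes>\<^bsub>S\<^esub> s"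
      using t' ring_hom_closed[OF hom] by (intro bexI[of _ "h t'"] bexI[of _ "h r'"]) auto
  next
    fix y s assume "y \<in> carrier S" "s \<in> h ` T" and ys: "y \<otimes>\<^bsub>S\<^esub> s = \<zero>\<^bsub>S\<^esub>"
    then obtain r t where r: "r \<in> carrier R" "y = h r" and t: "t \<in> T" "s = h t"
      using preimage by blast
    have tR: "t \<in> carrier R" using t TR by blast
    then have "h (r \<otimes>\<^bsub>R\<^esub> t) = \<zero>\<^bsub>S\<^esub>"
      using ys r t h_mult by simp
    then have "r \<otimes>\<^bsub>R\<^esub> t = \<zero>\<^bsub>R\<^esub>"
      using h_eq_zero R.m_closed[OF r(1) tR] by blast
    then obtain u where u: "u \<in> T" "u \<otimes>\<^bsub>R\<^esub> r = \<zero>\<^bsub>R\<^esub>"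
      using left_denominator_monoid_annihilator[OF TM r(1) t(1)] by blast
    have "h u \<otimes>\<^bsub>S\<^esub> y = h (u \<otimes>\<^bsub>R\<^esub> r)"
      using r u(1) TR h_mult by (simp add: subset_iff)
    then show "\<exists>u\<in>h ` T. u \<otimes>\<^bsub>S\<^esub> y = \<zero>\<^bsub>S\<^esub>"
      using u h_zero by (intro bexI[of _ "h u"]) auto
  qed
  moreover have "\<zero>\<^bsub>S\<^esub> \<notin> h ` T"
  proof
    assume "\<zero>\<^bsub>S\<^esub> \<in> h ` T"
    then obtain t where "t \<in> T" "h t = \<zero>\<^bsub>S\<^esub>" by force
    with TR T0 h_eq_zero[of t] show False by auto
  qed
  ultimately show ?thesis by (simp add: left_denominator_set_iff_monoid)
qed

lemma left_localizable_ring_iso: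
  assumes "ring R" and "ring S" and h: "h \<in> ring_iso R S" and "left_localizable R"
  shows "left_localizable S"
  unfolding left_localizable_def
proof (intro ballI impI)
  have hom: "h \<in> ring_hom R S" and bij: "bij_betw h (carrier R) (carrier S)"
    using h by (auto simp: ring_iso_def)
  fix y assume "y \<in> carrier S" and y: "y \<noteq> \<zero>\<^bsub>S\<^esub>"
  then obtain x where x: "x \<in> carrier R" "y = h x"
    using bij_betw_imp_surj_on[OF bij] by blast
  have "x \<noteq> \<zero>\<^bsub>R\<^esub>"
    using x y ring_hom_zero[OF hom assms(1,2)] by blast
  then obtain T where "left_denominator_set R T" "x \<in> T"
    using assms(4) x(1) unfolding left_localizable_def by blast
  then show "\<exists>T. left_denominator_set S T \<and> y \<in> T"
    using left_denominator_set_ring_iso_image[OF assms(1-3)] x(2) by blast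
qed

lemma RDirProd_mult [simp]:
  "(a, b) \<otimes>\<^bsub>RDirProd R S\<^esub> (c, d) = (a \<otimes>\<^bsub>R\<^esub> c, b \<otimes>\<^bsub>S\<^esub> d)"
  by (simp add: RDirProd_def DirProd_def monoid.defs)

lemma RDirProd_one [simp]: "\<one>\<^bsub>RDirProd R S\<^esub> = (\<one>\<^bsub>R\<^esub>, \<one>\<^bsub>S\<^esub>)"
  by (simp add: RDirProd_def DirProd_def monoid.defs)

lemma RDirProd_zero [simp]: "\<zero>\<^bsub>RDirProd R S\<^esub> = (\<zero>\<^bsub>R\<^esub>, \<zero>\<^bsub>S\<^esub>)"
  by (simp add: RDirProd_def DirProd_def monoid.defs)

lemma left_denominator_monoid_RDirProd:
  assumes A: "left_denominator_monoid R A" and B: "left_denominator_monoid S B"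
  shows "left_denominator_monoid (RDirProd R S) (A \<times> B)"
proof (rule left_denominator_monoidI)
  show "A \<times> B \<subseteq> carrier (RDirProd R S)"
    using left_denominator_monoid_subset[OF A] left_denominator_monoid_subset[OF B]
    by (auto simp: RDirProd_carrier)
  show "\<one>\<^bsub>RDirProd R S\<^esub> \<in> A \<times> B"
    using left_denominator_monoid_one[OF A] left_denominator_monoid_one[OF B] by simp
next
  fix s t assume "s \<in> A \<times> B" "t \<in> A \<times> B"
  then show "s \<otimes>\<^bsub>RDirProd R S\<^esub> t \<in> A \<times> B"
    using left_denominator_monoid_mult[OF A] left_denominator_monoid_mult[OF B] by auto
next
  fix r s assume "r \<in> carrier (RDirProd R S)" "s \<in> A \<times> B"
  then obtain r1 r2 s1 s2 where rs: "r = (r1, r2)" "s = (s1, s2)"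
    "r1 \<in> carrier R" "r2 \<in> carrier S" "s1 \<in> A" "s2 \<in> B"
    by (auto simp: RDirProd_carrier)
  obtain s1' r1' where "s1' \<in> A" "r1' \<in> carrier R" "s1' \<otimes>\<^bsub>R\<^esub> r1 = r1' \<otimes>\<^bsub>R\<^esub> s1"
    using left_denominator_monoid_Ore[OF A rs(3,5)] by blast
  moreover obtain s2' r2' where "s2' \<in> B" "r2' \<in> carrier S" "s2' \<otimes>\<^bsub>S\<^esub> r2 = r2' \<otimes>\<^bsub>S\<^esub> s2"
    using left_denominator_monoid_Ore[OF B rs(4,6)] by blast
  ultimately show "\<exists>s'\<in>A \<times> B. \<exists>r'\<in>carrier (RDirProd R S).
      s' \<otimes>\<^bsub>RDirProd R S\<^esub> r = r' \<otimes>\<^bsub>RDirProd R S\<^esub> s"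
    using rs(1,2) by (intro bexI[of _ "(s1', s2')"] bexI[of _ "(r1', r2')"])
      (auto simp: RDirProd_carrier)
next
  fix r s assume "r \<in> carrier (RDirProd R S)" "s \<in> A \<times> B"
    and rs0: "r \<otimes>\<^bsub>RDirProd R S\<^esub> s = \<zero>\<^bsub>RDirProd R S\<^esub>"
  then obtain r1 r2 s1 s2 where rs: "r = (r1, r2)" "s = (s1, s2)"
    "r1 \<in> carrier R" "r2 \<in> carrier S" "s1 \<in> A" "s2 \<in> B"
    by (auto simp: RDirProd_carrier)
  have "r1 \<otimes>\<^bsub>R\<^esub> s1 = \<zero>\<^bsub>R\<^esub>" "r2 \<otimes>\<^bsub>S\<^esub> s2 = \<zero>\<^bsub>S\<^esub>"
    using rs0 rs(1,2) by simp_all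
  then obtain t1 t2 where "t1 \<in> A" "t1 \<otimes>\<^bsub>R\<^esub> r1 = \<zero>\<^bsub>R\<^esub>" "t2 \<in> B" "t2 \<otimes>\<^bsub>S\<^esub> r2 = \<zero>\<^bsub>S\<^esub>"
    using left_denominator_monoid_annihilator[OF A rs(3,5)]
      left_denominator_monoid_annihilator[OF B rs(4,6)] by blast
  then show "\<exists>t\<in>A \<times> B. t \<otimes>\<^bsub>RDirProd R S\<^esub> r = \<zero>\<^bsub>RDirProd R S\<^esub>"
    using rs(1) by (intro bexI[of _ "(t1, t2)"]) auto
qed

lemma left_localizable_RDirProd:
  assumes "ring R" and "ring S" and "left_localizable R" and "left_localizable S"
  shows "left_localizable (RDirProd R S)"
  unfolding left_localizable_def
proof (intro ballI impI)
  fix p assume "p \<in> carrier (RDirProd R S)" and p: "p \<noteq> \<zero>\<^bsub>RDirProd R S\<^esub>"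
  then obtain a b where ab: "p = (a, b)" "a \<in> carrier R" "b \<in> carrier S"
    by (auto simp: RDirProd_carrier)
  obtain A where A: "left_denominator_monoid R A" "a \<in> A" "a \<noteq> \<zero>\<^bsub>R\<^esub> \<longrightarrow> \<zero>\<^bsub>R\<^esub> \<notin> A"
    using ring.ex_left_denominator_monoid[OF assms(1,3) ab(2)] by blast
  obtain B where B: "left_denominator_monoid S B" "b \<in> B" "b \<noteq> \<zero>\<^bsub>S\<^esub> \<longrightarrow> \<zero>\<^bsub>S\<^esub> \<notin> B"
    using ring.ex_left_denominator_monoid[OF assms(2,4) ab(3)] by blast
  have "\<zero>\<^bsub>RDirProd R S\<^esub> \<notin> A \<times> B"
    using p ab(1) A(3) B(3) by auto
  then have "left_denominator_set (RDirProd R S) (A \<times> B)"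
    using left_denominator_monoid_RDirProd[OF A(1) B(1)] by (simp add: left_denominator_set_iff_monoid)
  then show "\<exists>T. left_denominator_set (RDirProd R S) T \<and> p \<in> T"
    using A(2) B(2) ab(1) by blast
qed

lemma left_denominator_set_RDirProd_fst_image:
  assumes "ring R" and "ring S" and T: "left_denominator_set (RDirProd R S) T"
    and a: "(a, \<zero>\<^bsub>S\<^esub>) \<in> T"
  shows "left_denominator_set R (fst ` T)"
proof -
  interpret R: ring R by fact
  interpret S: ring S by fact
  have TM: "left_denominator_monoid (RDirProd R S) T" and T0: "(\<zero>\<^bsub>R\<^esub>, \<zero>\<^bsub>S\<^esub>) \<notin> T"
    using T by (auto simp: left_denominator_set_iff_monoid)
  have TC: "T \<subseteq> carrier R \<times> carrier S"
    using left_denominator_monoid_subset[OF TM] by (simp add: RDirProd_carrier)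
  have lift: "(r, \<zero>\<^bsub>S\<^esub>) \<in> carrier (RDirProd R S)" if "r \<in> carrier R" for r
    using that by (simp add: RDirProd_carrier)
  have "left_denominator_monoid R (fst ` T)"
  proof (rule left_denominator_monoidI)
    show "fst ` T \<subseteq> carrier R" using TC by auto
    show "\<one>\<^bsub>R\<^esub> \<in> fst ` T"
      using left_denominator_monoid_one[OF TM] by force
  next
    fix x y assume "x \<in> fst ` T" "y \<in> fst ` T"
    then obtain x' y' where "(x, x') \<in> T" "(y, y') \<in> T" by force
    from left_denominator_monoid_mult[OF TM this]
    show "x \<otimes>\<^bsub>R\<^esub> y \<in> fst ` T" by force
  next
    fix r x assume r: "r \<in> carrier R" and "x \<in> fst ` T"
    then obtain x' where x: "(x, x') \<in> T" by force
    obtain t r' where "t \<in> T" "r' \<in> carrier (RDirProd R S)"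
      "t \<otimes>\<^bsub>RDirProd R S\<^esub> (r, \<zero>\<^bsub>S\<^esub>) = r' \<otimes>\<^bsub>RDirProd R S\<^esub> (x, x')"
      using left_denominator_monoid_Ore[OF TM lift[OF r] x] by blast
    then show "\<exists>s'\<in>fst ` T. \<exists>r'\<in>carrier R. s' \<otimes>\<^bsub>R\<^esub> r = r' \<otimes>\<^bsub>R\<^esub> x"
      by (cases t; cases r') (force simp: RDirProd_carrier)
  next
    fix r x assume r: "r \<in> carrier R" and "x \<in> fst ` T" and rx: "r \<otimes>\<^bsub>R\<^esub> x = \<zero>\<^bsub>R\<^esub>"
    then obtain x' where x: "(x, x') \<in> T" by force
    then have "(r, \<zero>\<^bsub>S\<^esub>) \<otimes>\<^bsub>RDirProd R S\<^esub> (x, x') = \<zero>\<^bsub>RDirProd R S\<^esub>"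
      using rx TC by auto
    then obtain t where "t \<in> T" "t \<otimes>\<^bsub>RDirProd R S\<^esub> (r, \<zero>\<^bsub>S\<^esub>) = \<zero>\<^bsub>RDirProd R S\<^esub>"
      using left_denominator_monoid_annihilator[OF TM lift[OF r] x] by blast
    then show "\<exists>t\<in>fst ` T. t \<otimes>\<^bsub>R\<^esub> r = \<zero>\<^bsub>R\<^esub>"
      by (cases t) force
  qed
  moreover have "\<zero>\<^bsub>R\<^esub> \<notin> fst ` T"
  proof
    assume "\<zero>\<^bsub>R\<^esub> \<in> fst ` T"
    then obtain y where y: "(\<zero>\<^bsub>R\<^esub>, y) \<in> T" by force
    have "(\<zero>\<^bsub>R\<^esub>, y) \<otimes>\<^bsub>RDirProd R S\<^esub> (a, \<zero>\<^bsub>S\<^esub>) = (\<zero>\<^bsub>R\<^esub>, \<zero>\<^bsub>S\<^esub>)"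
      using y a TC by auto
    with left_denominator_monoid_mult[OF TM y a] T0 show False by simp
  qed
  ultimately show ?thesis by (simp add: left_denominator_set_iff_monoid)
qed

lemma left_localizable_RDirProd_fst:
  assumes "ring R" and "ring S" and "left_localizable (RDirProd R S)"
  shows "left_localizable R"
  unfolding left_localizable_def
proof (intro ballI impI)
  fix a assume "a \<in> carrier R" and "a \<noteq> \<zero>\<^bsub>R\<^esub>"
  then have "(a, \<zero>\<^bsub>S\<^esub>) \<in> carrier (RDirProd R S)" "(a, \<zero>\<^bsub>S\<^esub>) \<noteq> \<zero>\<^bsub>RDirProd R S\<^esub>"
    using ring.ring_simprules(2)[OF assms(2)] by (auto simp: RDirProd_carrier)
  then obtain T where "left_denominator_set (RDirProd R S) T" "(a, \<zero>\<^bsub>S\<^esub>) \<in> T"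
    using assms(3) unfolding left_localizable_def by blast
  then show "\<exists>T. left_denominator_set R T \<and> a \<in> T"
    using left_denominator_set_RDirProd_fst_image[OF assms(1,2)] by force
qed

lemma left_localizable_RDirProd_iff:
  assumes "ring R" and "ring S"
  shows "left_localizable (RDirProd R S) \<longleftrightarrow> left_localizable R \<and> left_localizable S"
  using left_localizable_RDirProd[OF assms] left_localizable_RDirProd_fst[OF assms]
    left_localizable_RDirProd_fst[OF assms(2,1)]
    left_localizable_ring_iso[OF RDirProd_ring[OF assms] RDirProd_ring[OF assms(2,1)] RDirProd_iso1]
  by blast

lemma left_localizable_RDirProd_list_Cons:
  assumes "ring R" and "ring (RDirProd_list Rs)"
  shows "left_localizable (RDirProd_list (R # Rs)) \<longleftrightarrow>
         left_localizable R \<and> left_localizable (RDirProd_list Rs)"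
proof -
  have pair: "ring (RDirProd R (RDirProd_list Rs))"
    using RDirProd_ring[OF assms] .
  have list: "ring (RDirProd_list (R # Rs))"
    using ring.inj_imp_image_ring_is_ring[OF pair inj_on_RDirProd_carrier]
    unfolding RDirProd_list_def by simp
  have "left_localizable (RDirProd_list (R # Rs)) \<longleftrightarrow>
        left_localizable (RDirProd R (RDirProd_list Rs))"
    using left_localizable_ring_iso[OF pair list RDirProd_list_iso1]
      left_localizable_ring_iso[OF list pair RDirProd_list_iso2] by blast
  with left_localizable_RDirProd_iff[OF assms] show ?thesis by simp
qed

theorem theorem3p1:
  fixes Rs :: "('a, 'n) ring_scheme list"
  assumes "\<forall>R\<in>set Rs. ring R"
  shows "left_localizable (RDirProd_list Rs) \<longleftrightarrow> (\<forall>R\<in>set Rs. left_localizable R)"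
  using assms
proof (induction Rs)
  case Nil
  have "left_localizable (RDirProd_list ([] :: ('a, 'n) ring_scheme list))"
    by (rule left_localizable_trivial) (simp add: monoid.defs)
  then show ?case by simp
next
  case (Cons R Rs)
  have "ring (RDirProd_list Rs)"
    using Cons.prems by (intro RDirProd_list_is_ring) auto
  with Cons show ?case
    by (simp add: left_localizable_RDirProd_list_Cons)
qed

end
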